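(* Let $\gamma$ be a gauge on $\mathbb{R}^d$ with skewness $\sigma$. The Fermat–Weber estimator with respect to $\gamma$ has breakdown point exactly $\frac{1}{1+\sigma}$.
   Context: A gauge $\gamma$ on $\mathbb{R}^d$ is the Minkowski functional of a convex compact set $B_\gamma$ with the origin in its interior (not necessarily symmetric); its skewness is $\sigma=\sup_{x\neq0}\gamma(x)/\gamma(-x)$. For a finite set $A$ with positive weights summing to $1$, the Fermat–Weber set $\mathrm{FW}_\gamma(A,w)$ is the set of minimizers of $\sum_{a\in A}w_a\gamma(x-a)$. For $\tau<1$, a $\tau$-corruption of $(A,w)$ is obtained by replacing a subsample $C\subseteq A$ of total weight $w_C\le\tau$ by another finite weighted sample $C'$ of the same total weight. The estimator is $\tau$-robust if for every such $(A,w)$ there is a bounded set $K_\tau$ containing $\mathrm{FW}_\gamma(A')$ for all $\tau$-corruptions $A'$ of $A$. The breakdown point is the supremum of all $\tau$ for which the estimator is $\tau$-robust. *)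

theory Defs
  imports "HOL-Analysis.Analysis"
begin

definition minkowski_functional :: "'a::euclidean_space set \<Rightarrow> 'a \<Rightarrow> real" where
  "minkowski_functional B x = Inf {t. 0 < t \<and> x \<in> (\<lambda>b. t *\<^sub>R b) ` B}"

definition is_gauge :: "('a::euclidean_space \<Rightarrow> real) \<Rightarrow> bool" where
  "is_gauge g \<longleftrightarrow> (\<exists>B. convex B \<and> compact B \<and> 0 \<in> interior B \<and> g = minkowski_functional B)"

definition skewness :: "('a::euclidean_space \<Rightarrow> real) \<Rightarrow> real" where
  "skewness g = (SUP x\<in>UNIV - {0}. g x / g (- x))"

text \<open>A finite weighted sample is represented by its weight function: finite support,
  nonnegative weights (the support is the sample A, weights there are positive).\<close>
definition fin_weights :: "('a \<Rightarrow> real) \<Rightarrow> bool" where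
  "fin_weights w \<longleftrightarrow> finite {a. w a \<noteq> 0} \<and> (\<forall>a. 0 \<le> w a)"

definition sample :: "('a \<Rightarrow> real) \<Rightarrow> bool" where
  "sample w \<longleftrightarrow> fin_weights w \<and> sum w {a. w a \<noteq> 0} = 1"

definition fw_objective :: "('a::euclidean_space \<Rightarrow> real) \<Rightarrow> ('a \<Rightarrow> real) \<Rightarrow> 'a \<Rightarrow> real" where
  "fw_objective g w x = (\<Sum>a\<in>{a. w a \<noteq> 0}. w a * g (x - a))"

definition FW_set :: "('a::euclidean_space \<Rightarrow> real) \<Rightarrow> ('a \<Rightarrow> real) \<Rightarrow> 'a set" where
  "FW_set g w = {x. \<forall>y. fw_objective g w x \<le> fw_objective g w y}"

definition corruption :: "real \<Rightarrow> ('a \<Rightarrow> real) \<Rightarrow> ('a \<Rightarrow> real) \<Rightarrow> bool" where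
  "corruption \<tau> w w' \<longleftrightarrow>
     (\<exists>C v. C \<subseteq> {a. w a \<noteq> 0} \<and> sum w C \<le> \<tau> \<and> fin_weights v \<and>
            sum v {a. v a \<noteq> 0} = sum w C \<and>
            w' = (\<lambda>a. (if a \<in> C then 0 else w a) + v a))"

definition robust :: "('a::euclidean_space \<Rightarrow> real) \<Rightarrow> real \<Rightarrow> bool" where
  "robust g \<tau> \<longleftrightarrow> (\<forall>w. sample w \<longrightarrow>
      (\<exists>K. bounded K \<and> (\<forall>w'. corruption \<tau> w w' \<longrightarrow> FW_set g w' \<subseteq> K)))"

definition breakdown_point :: "('a::euclidean_space \<Rightarrow> real) \<Rightarrow> real" where
  "breakdown_point g = Sup {\<tau>. 0 \<le> \<tau> \<and> \<tau> < 1 \<and> robust g \<tau>}"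

end

theory Submission
  imports Defs
begin

text \<open>Write \<open>\<sigma>\<close> for the skewness. If a sample of total weight one loses mass \<open>s\<close> to a
  corruption, the surviving points raise the objective at \<open>x\<close> (relative to the origin) by at
  least \<open>(1 - s) \<gamma>(x)\<close> up to a constant, while the inserted mass can lower it by at most
  \<open>s \<gamma>(-x) \<le> s \<sigma> \<gamma>(x)\<close>. Hence every Fermat--Weber point satisfies
  \<open>(1 - \<tau>(1 + \<sigma>)) \<gamma>(x) \<le> const\<close>, a uniform bound when \<open>\<tau> < 1/(1 + \<sigma>)\<close>.
  Conversely, if \<open>\<tau>(1 + \<sigma>) > 1\<close> there is a direction \<open>u\<close> with
  \<open>\<tau> \<gamma>(u) > (1 - \<tau>) \<gamma>(-u)\<close>; take weight \<open>1 - \<tau>\<close> at \<open>0\<close> and \<open>\<tau>\<close> at \<open>u\<close>, and move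
  the atom at \<open>u\<close> to \<open>-t u\<close>. Every minimiser \<open>x\<close> of the corrupted sample then satisfies
  \<open>\<tau> \<gamma>(-x) \<ge> t (\<tau> \<gamma>(u) - (1 - \<tau>) \<gamma>(-u))\<close>, which is unbounded in \<open>t\<close>.\<close>

lemma mem_scaleR_image_iff:
  fixes B :: "'a::real_vector set"
  assumes "0 < t"
  shows "x \<in> (\<lambda>b. t *\<^sub>R b) ` B \<longleftrightarrow> x /\<^sub>R t \<in> B"
proof
  assume "x /\<^sub>R t \<in> B"
  moreover have "x = t *\<^sub>R (x /\<^sub>R t)" using assms by simp
  ultimately show "x \<in> (\<lambda>b. t *\<^sub>R b) ` B" by blast
qed (use assms in auto)

lemma minkowski_functional_eq:
  "minkowski_functional B x = Inf {t. 0 < t \<and> x /\<^sub>R t \<in> B}"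
  unfolding minkowski_functional_def by (metis mem_scaleR_image_iff)

lemma minkowski_functional_le:
  assumes "0 < t" "x /\<^sub>R t \<in> B"
  shows "minkowski_functional B x \<le> t"
  unfolding minkowski_functional_eq
  by (rule cInf_lower) (use assms in \<open>auto intro: bdd_belowI[of _ 0]\<close>)

lemma divideR_mem_of_cball_subset:
  fixes x :: "'a::real_normed_vector"
  assumes "0 < r" "cball 0 r \<subseteq> B" "norm x / r < t"
  shows "0 < t" "x /\<^sub>R t \<in> B"
proof -
  show "0 < t" using assms(1,3) by (smt (verit) divide_nonneg_pos norm_ge_zero)
  then have "norm (x /\<^sub>R t) \<le> r" using assms(1,3) by (simp add: field_simps)
  then show "x /\<^sub>R t \<in> B" using assms(2) by auto
qed

lemma minkowski_functional_le_norm: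
  assumes "0 < r" "cball 0 r \<subseteq> B"
  shows "minkowski_functional B x \<le> norm x / r"
  using divideR_mem_of_cball_subset[OF assms] by (metis dense_ge minkowski_functional_le)

lemma convex_divideR_add_mem:
  fixes x y :: "'a::real_vector"
  assumes "convex B" "0 < s" "0 < t" "x /\<^sub>R s \<in> B" "y /\<^sub>R t \<in> B"
  shows "(x + y) /\<^sub>R (s + t) \<in> B"
proof -
  have "(s / (s + t)) *\<^sub>R (x /\<^sub>R s) + (t / (s + t)) *\<^sub>R (y /\<^sub>R t) \<in> B"
    using mem_convex_alt[OF assms(1,4,5), of s t] assms(2,3) by fastforce
  moreover have "(s / (s + t)) *\<^sub>R (x /\<^sub>R s) + (t / (s + t)) *\<^sub>R (y /\<^sub>R t) = (x + y) /\<^sub>R (s + t)"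
    using assms(2,3) by (simp add: scaleR_add_right inverse_eq_divide)
  ultimately show ?thesis by (simp only:)
qed

context
  fixes B :: "'a::euclidean_space set"
  assumes convex: "convex B" and absorbing: "0 \<in> interior B"
begin

lemma minkowski_functional_admissible_nonempty:
  "\<exists>t>0. x /\<^sub>R t \<in> B"
proof -
  obtain r where "0 < r" "cball 0 r \<subseteq> B" using absorbing mem_interior_cball by blast
  then show ?thesis using divideR_mem_of_cball_subset[of r B x "norm x / r + 1"] by auto
qed

lemma minkowski_functional_less_imp_mem:
  assumes "minkowski_functional B x < t"
  shows "x /\<^sub>R t \<in> B"
proof -
  obtain s where s: "0 < s" "x /\<^sub>R s \<in> B" "s < t"
    using cInf_lessD[of "{t. 0 < t \<and> x /\<^sub>R t \<in> B}" t] assms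
      minkowski_functional_admissible_nonempty
    unfolding minkowski_functional_eq by blast
  have "0 \<in> B" using absorbing interior_subset by blast
  moreover have "0 \<le> s / t" "s / t \<le> 1" using s by auto
  ultimately have "(1 - s / t) *\<^sub>R 0 + (s / t) *\<^sub>R (x /\<^sub>R s) \<in> B"
    using convexD_alt[OF convex _ s(2)] by blast
  moreover have "(s / t) *\<^sub>R (x /\<^sub>R s) = x /\<^sub>R t"
    using s by (simp add: field_simps)
  ultimately show ?thesis by (simp only: scaleR_zero_right add_0_left)
qed

lemma minkowski_functional_ge_norm:
  assumes "0 < R" "\<forall>b\<in>B. norm b \<le> R"
  shows "norm x / R \<le> minkowski_functional B x"
  unfolding minkowski_functional_eq
proof (rule cInf_greatest)
  show "{t. 0 < t \<and> x /\<^sub>R t \<in> B} \<noteq> {}"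
    using minkowski_functional_admissible_nonempty by simp
  fix t assume "t \<in> {t. 0 < t \<and> x /\<^sub>R t \<in> B}"
  then have "0 < t" "norm x / t \<le> R" using assms(2) by (auto simp: divide_inverse_commute)
  then show "norm x / R \<le> t" using assms(1) by (simp add: field_simps)
qed

lemma minkowski_functional_nonneg: "0 \<le> minkowski_functional B x"
  unfolding minkowski_functional_eq
  by (rule cInf_greatest) (use minkowski_functional_admissible_nonempty in auto)

lemma minkowski_functional_triangle:
  "minkowski_functional B (x + y) \<le> minkowski_functional B x + minkowski_functional B y"
proof (rule field_le_epsilon)
  fix e :: real assume "0 < e"
  define s where "s = minkowski_functional B x + e / 2"
  define t where "t = minkowski_functional B y + e / 2"
  have st: "0 < s" "0 < t" "x /\<^sub>R s \<in> B" "y /\<^sub>R t \<in> B"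
    using \<open>0 < e\<close> minkowski_functional_nonneg minkowski_functional_less_imp_mem
    unfolding s_def t_def by (auto intro: add_nonneg_pos)
  have "minkowski_functional B (x + y) \<le> s + t"
    using st convex_divideR_add_mem[OF convex] by (intro minkowski_functional_le) auto
  then show "minkowski_functional B (x + y) \<le> minkowski_functional B x + minkowski_functional B y + e"
    unfolding s_def t_def by simp
qed

lemma minkowski_functional_scaleR_le:
  assumes "0 < c"
  shows "minkowski_functional B (c *\<^sub>R x) \<le> c * minkowski_functional B x"
proof -
  have "minkowski_functional B (c *\<^sub>R x) / c \<le> t" if "minkowski_functional B x < t" for t
  proof -
    have "0 < t" using that minkowski_functional_nonneg[of x] by linarith
    moreover have "(c *\<^sub>R x) /\<^sub>R (c * t) = x /\<^sub>R t" using assms by (simp add: field_simps)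
    then have "(c *\<^sub>R x) /\<^sub>R (c * t) \<in> B" using minkowski_functional_less_imp_mem[OF that] by (simp only:)
    ultimately have "minkowski_functional B (c *\<^sub>R x) \<le> c * t"
      using assms by (intro minkowski_functional_le) simp_all
    then show ?thesis using assms by (simp add: field_simps)
  qed
  then have "minkowski_functional B (c *\<^sub>R x) / c \<le> minkowski_functional B x"
    by (rule dense_ge)
  then show ?thesis using assms by (simp add: field_simps)
qed

lemma minkowski_functional_scaleR:
  assumes "0 < c"
  shows "minkowski_functional B (c *\<^sub>R x) = c * minkowski_functional B x"
proof -
  have "minkowski_functional B x \<le> inverse c * minkowski_functional B (c *\<^sub>R x)"
    using minkowski_functional_scaleR_le[of "inverse c" "c *\<^sub>R x"] assms by simp
  then show ?thesis using minkowski_functional_scaleR_le[OF assms, of x] assms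
    by (simp add: field_simps)
qed

end

definition mass :: "('a \<Rightarrow> real) \<Rightarrow> real" where
  "mass w = sum w {a. w a \<noteq> 0}"

definition point_weight :: "'a \<Rightarrow> real \<Rightarrow> 'a \<Rightarrow> real" where
  "point_weight p \<alpha> = (\<lambda>a. if a = p then \<alpha> else 0)"

lemma fin_weights_point_weight: "0 \<le> \<alpha> \<Longrightarrow> fin_weights (point_weight p \<alpha>)"
  unfolding fin_weights_def point_weight_def by (auto intro: finite_subset[of _ "{p}"])

lemma mass_point_weight: "mass (point_weight p \<alpha>) = \<alpha>"
  unfolding mass_def point_weight_def by (cases "\<alpha> = 0") auto

lemma fw_objective_point_weight: "fw_objective g (point_weight p \<alpha>) x = \<alpha> * g (x - p)"
  unfolding fw_objective_def point_weight_def by (cases "\<alpha> = 0") auto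

lemma fw_objective_eq_sum_superset:
  assumes "finite S" "{a. w a \<noteq> 0} \<subseteq> S"
  shows "fw_objective g w x = (\<Sum>a\<in>S. w a * g (x - a))"
  unfolding fw_objective_def using assms by (intro sum.mono_neutral_left) auto

lemma mass_eq_sum_superset:
  assumes "finite S" "{a. w a \<noteq> 0} \<subseteq> S"
  shows "mass w = sum w S"
  unfolding mass_def using assms by (intro sum.mono_neutral_left) auto

lemma fin_weights_add:
  assumes "fin_weights u" "fin_weights v"
  shows "fin_weights (\<lambda>a. u a + v a)"
  using assms unfolding fin_weights_def
  by (auto intro: finite_subset[of _ "{a. u a \<noteq> 0} \<union> {a. v a \<noteq> 0}"])

lemma fw_objective_add:
  assumes "fin_weights u" "fin_weights v"
  shows "fw_objective g (\<lambda>a. u a + v a) x = fw_objective g u x + fw_objective g v x"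
proof -
  define S where "S = {a. u a \<noteq> 0} \<union> {a. v a \<noteq> 0}"
  have "finite S" using assms unfolding S_def fin_weights_def by simp
  then show ?thesis
    using fw_objective_eq_sum_superset[OF \<open>finite S\<close>, of _ g x]
    by (simp add: S_def sum.distrib distrib_right subset_iff)
qed

lemma mass_add:
  assumes "fin_weights u" "fin_weights v"
  shows "mass (\<lambda>a. u a + v a) = mass u + mass v"
proof -
  define S where "S = {a. u a \<noteq> 0} \<union> {a. v a \<noteq> 0}"
  have "finite S" using assms unfolding S_def fin_weights_def by simp
  then show ?thesis
    using mass_eq_sum_superset[OF \<open>finite S\<close>] by (simp add: S_def sum.distrib subset_iff)
qed

lemma corruption_fw_objective:
  assumes "fin_weights w" "corruption \<tau> w w'"
  obtains C v where "C \<subseteq> {a. w a \<noteq> 0}" "sum w C \<le> \<tau>" "fin_weights v" "mass v = sum w C"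
    "\<And>x. fw_objective g w' x = (\<Sum>a\<in>{a. w a \<noteq> 0} - C. w a * g (x - a)) + fw_objective g v x"
proof -
  obtain C v where C: "C \<subseteq> {a. w a \<noteq> 0}" "sum w C \<le> \<tau>" and v: "fin_weights v"
    "mass v = sum w C" and w': "w' = (\<lambda>a. (if a \<in> C then 0 else w a) + v a)"
    using assms(2) unfolding corruption_def mass_def by blast
  define u where "u a = (if a \<in> C then 0 else w a)" for a
  have supp_u: "{a. u a \<noteq> 0} = {a. w a \<noteq> 0} - C" unfolding u_def by auto
  have "fin_weights u" using assms(1) unfolding fin_weights_def supp_u by (simp add: u_def)
  moreover have "fw_objective g u x = (\<Sum>a\<in>{a. w a \<noteq> 0} - C. w a * g (x - a))" for x
    unfolding fw_objective_def supp_u by (simp add: u_def)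
  ultimately show thesis
    using that[OF C v] fw_objective_add[OF _ v(1)] unfolding w' u_def by simp
qed

locale asymmetric_norm =
  fixes g :: "'a::euclidean_space \<Rightarrow> real"
  assumes triangle: "g (x + y) \<le> g x + g y"
    and scaleR: "0 < c \<Longrightarrow> g (c *\<^sub>R x) = c * g x"
    and norm_lower_bound: "\<exists>m>0. \<forall>x. m * norm x \<le> g x"
    and norm_upper_bound: "\<exists>M\<ge>0. \<forall>x. g x \<le> M * norm x"

lemma is_gauge_imp_asymmetric_norm:
  assumes "is_gauge g"
  shows "asymmetric_norm g"
proof -
  obtain B where B: "convex B" "compact B" "0 \<in> interior B" and g: "g = minkowski_functional B"
    using assms unfolding is_gauge_def by blast
  obtain r where r: "0 < r" "cball 0 r \<subseteq> B" using B(3) mem_interior_cball by blast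
  obtain R where R: "0 < R" "\<forall>b\<in>B. norm b \<le> R"
    using B(2) compact_imp_bounded bounded_pos by blast
  show ?thesis
  proof
    show "\<exists>m>0. \<forall>x. m * norm x \<le> g x"
      using R minkowski_functional_ge_norm[OF B(1,3) R] unfolding g
      by (intro exI[of _ "1 / R"]) simp
    show "\<exists>M\<ge>0. \<forall>x. g x \<le> M * norm x"
      using r minkowski_functional_le_norm[OF r] unfolding g
      by (intro exI[of _ "1 / r"]) simp
  qed (use B minkowski_functional_triangle minkowski_functional_scaleR in \<open>simp_all add: g\<close>)
qed

context asymmetric_norm
begin

lemma nonneg: "0 \<le> g x"
proof -
  obtain m where "0 < m" "\<forall>x. m * norm x \<le> g x" using norm_lower_bound by blast
  then show ?thesis by (smt (verit) mult_nonneg_nonneg norm_ge_zero)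
qed

lemma pos: "x \<noteq> 0 \<Longrightarrow> 0 < g x"
proof -
  assume "x \<noteq> 0"
  obtain m where "0 < m" "\<forall>x. m * norm x \<le> g x" using norm_lower_bound by blast
  then show ?thesis using \<open>x \<noteq> 0\<close> by (smt (verit) mult_pos_pos zero_less_norm_iff)
qed

lemma zero [simp]: "g 0 = 0"
  using scaleR[of 2 0] by simp

lemma le_diff_add: "g x \<le> g (x - y) + g y"
  using triangle[of "x - y" y] by simp

lemma continuous_on: "continuous_on UNIV g"
proof -
  obtain M where M: "0 \<le> M" "\<forall>x. g x \<le> M * norm x" using norm_upper_bound by blast
  have "dist (g x) (g y) \<le> M * dist x y" for x y
    using le_diff_add[of x y] le_diff_add[of y x] M(2)[rule_format, of "x - y"]
      M(2)[rule_format, of "y - x"]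
    by (simp add: dist_real_def dist_norm norm_minus_commute abs_le_iff)
  then have "M-lipschitz_on UNIV g" using M(1) by (intro lipschitz_onI)
  then show ?thesis by (rule lipschitz_on_continuous_on)
qed

lemma bounded_sublevel: "bounded {x. g x \<le> c}"
proof -
  obtain m where m: "0 < m" "\<forall>x. m * norm x \<le> g x" using norm_lower_bound by blast
  have "{x. g x \<le> c} \<subseteq> cball 0 (c / m)"
    using m by (auto simp: field_simps) (use order_trans in blast)
  then show ?thesis using bounded_cball bounded_subset by blast
qed

lemma bounded_imp_bounded_values:
  assumes "bounded K"
  obtains R where "\<And>x. x \<in> K \<Longrightarrow> g x \<le> R"
proof -
  obtain M where M: "0 \<le> M" "\<forall>x. g x \<le> M * norm x" using norm_upper_bound by blast
  obtain b where "\<forall>x\<in>K. norm x \<le> b" using assms bounded_iff by blast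
  then have "g x \<le> M * b" if "x \<in> K" for x
    using that M by (meson mult_left_mono order_trans)
  then show thesis by (rule that)
qed

lemma bdd_above_skew_ratios: "bdd_above ((\<lambda>x. g x / g (- x)) ` (UNIV - {0}))"
proof -
  obtain m where m: "0 < m" "\<forall>x. m * norm x \<le> g x" using norm_lower_bound by blast
  obtain M where M: "0 \<le> M" "\<forall>x. g x \<le> M * norm x" using norm_upper_bound by blast
  have "g x / g (- x) \<le> M / m" if "x \<noteq> 0" for x
  proof -
    have "g x * m \<le> M * (m * norm x)" using M m by (simp add: mult.commute mult_left_mono)
    also have "\<dots> \<le> M * g (- x)" using m(2)[rule_format, of "- x"] M(1) by (simp add: mult_left_mono)
    finally show ?thesis using pos[of "- x"] m(1) that by (simp add: field_simps)
  qed
  then show ?thesis by (intro bdd_aboveI[of _ "M / m"]) auto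
qed

lemma le_skewness_mult: "g x \<le> skewness g * g (- x)"
proof (cases "x = 0")
  case False
  then have "g x / g (- x) \<le> skewness g"
    unfolding skewness_def by (intro cSUP_upper[OF _ bdd_above_skew_ratios]) auto
  then show ?thesis using pos[of "- x"] False by (simp add: field_simps)
qed simp

lemma skewness_nonneg: "0 \<le> skewness g"
proof -
  obtain b :: 'a where "b \<in> Basis" using nonempty_Basis by blast
  then have "b \<noteq> 0" by auto
  show ?thesis
  proof (rule ccontr)
    assume "\<not> 0 \<le> skewness g"
    then have "skewness g * g (- b) < 0" using pos[of "- b"] \<open>b \<noteq> 0\<close> by (simp add: mult_neg_pos)
    then show False using le_skewness_mult[of b] pos[of b] \<open>b \<noteq> 0\<close> by linarith
  qed
qed

lemma less_skewnessE:
  assumes "c < skewness g"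
  obtains u where "c * g (- u) < g u"
proof -
  obtain b :: 'a where "b \<in> Basis" using nonempty_Basis by blast
  then have "UNIV - {0::'a} \<noteq> {}" by auto
  then obtain u where "u \<noteq> 0" "c < g u / g (- u)"
    using assms less_cSUP_iff[OF _ bdd_above_skew_ratios] unfolding skewness_def by blast
  then show thesis using that pos[of "- u"] by (simp add: field_simps)
qed

lemma continuous_on_fw_objective: "continuous_on UNIV (fw_objective g w)"
  unfolding fw_objective_def
  by (intro continuous_on_sum continuous_on_mult continuous_on_const
      continuous_on_compose2[OF continuous_on] continuous_intros) auto

lemma fw_objective_ge_mass:
  assumes "fin_weights w"
  shows "mass w * g x - (\<Sum>a\<in>{a. w a \<noteq> 0}. w a * g a) \<le> fw_objective g w x"
proof -
  have "mass w * g x - (\<Sum>a\<in>{a. w a \<noteq> 0}. w a * g a)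
      = (\<Sum>a\<in>{a. w a \<noteq> 0}. w a * g x - w a * g a)"
    unfolding mass_def by (simp add: sum_distrib_right sum_subtractf)
  also have "\<dots> \<le> fw_objective g w x"
    unfolding fw_objective_def
  proof (rule sum_mono)
    fix a
    have "w a * g x \<le> w a * (g (x - a) + g a)"
      using le_diff_add[of x a] assms unfolding fin_weights_def by (simp add: mult_left_mono)
    then show "w a * g x - w a * g a \<le> w a * g (x - a)" by (simp add: algebra_simps)
  qed
  finally show ?thesis .
qed

lemma FW_set_nonempty:
  assumes "fin_weights w" "0 < mass w"
  shows "FW_set g w \<noteq> {}"
proof -
  define f where "f = fw_objective g w"
  define K where "K = {x. f x \<le> f 0}"
  define c where "c = (f 0 + (\<Sum>a\<in>{a. w a \<noteq> 0}. w a * g a)) / mass w"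
  have "K \<subseteq> {x. g x \<le> c}"
  proof
    fix x assume "x \<in> K"
    then have "mass w * g x \<le> f 0 + (\<Sum>a\<in>{a. w a \<noteq> 0}. w a * g a)"
      using fw_objective_ge_mass[OF assms(1), of x] unfolding K_def f_def by simp
    then show "x \<in> {x. g x \<le> c}" using assms(2) by (simp add: c_def field_simps)
  qed
  then have "bounded K" using bounded_sublevel bounded_subset by blast
  moreover have "closed K"
    unfolding K_def f_def using continuous_on_fw_objective
    by (intro closed_Collect_le) (auto intro: continuous_on_const)
  ultimately have "compact K" by (simp add: compact_eq_bounded_closed)
  moreover have "0 \<in> K" unfolding K_def by simp
  ultimately obtain z where z: "z \<in> K" "\<forall>y\<in>K. f z \<le> f y"
    using continuous_attains_inf[of K f] continuous_on_fw_objective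
    unfolding f_def by (metis continuous_on_subset empty_iff subset_UNIV)
  then have "f z \<le> f y" for y by (cases "y \<in> K") (auto simp: K_def)
  then show ?thesis unfolding FW_set_def f_def by blast
qed

lemma fw_objective_le_at_zero:
  assumes "fin_weights v"
  shows "fw_objective g v 0 \<le> fw_objective g v x + mass v * g (- x)"
proof -
  have "fw_objective g v 0 \<le> (\<Sum>a\<in>{a. v a \<noteq> 0}. v a * g (x - a) + v a * g (- x))"
    unfolding fw_objective_def
  proof (rule sum_mono)
    fix a
    have "v a * g (0 - a) \<le> v a * (g (x - a) + g (- x))"
      using triangle[of "x - a" "- x"] assms unfolding fin_weights_def by (simp add: mult_left_mono)
    then show "v a * g (0 - a) \<le> v a * g (x - a) + v a * g (- x)" by (simp add: distrib_left)
  qed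
  also have "\<dots> = fw_objective g v x + mass v * g (- x)"
    unfolding fw_objective_def mass_def by (simp add: sum.distrib sum_distrib_right)
  finally show ?thesis .
qed

lemma weighted_sum_increment_ge:
  assumes "finite A" "\<And>a. 0 \<le> w a"
  shows "sum w A * g x - (\<Sum>a\<in>A. w a * (g a + g (- a)))
    \<le> (\<Sum>a\<in>A. w a * g (x - a)) - (\<Sum>a\<in>A. w a * g (0 - a))"
proof -
  have "sum w A * g x - (\<Sum>a\<in>A. w a * (g a + g (- a)))
      = (\<Sum>a\<in>A. w a * g x - w a * (g a + g (- a)))"
    by (simp add: sum_distrib_right sum_subtractf)
  also have "\<dots> \<le> (\<Sum>a\<in>A. w a * g (x - a) - w a * g (0 - a))"
  proof (rule sum_mono)
    fix a
    have "w a * g x \<le> w a * (g a + g (x - a))"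
      using le_diff_add[of x a] assms(2)[of a] by (simp add: mult_left_mono add.commute)
    then show "w a * g x - w a * (g a + g (- a)) \<le> w a * g (x - a) - w a * g (0 - a)"
      by (simp add: algebra_simps)
  qed
  also have "\<dots> = (\<Sum>a\<in>A. w a * g (x - a)) - (\<Sum>a\<in>A. w a * g (0 - a))"
    by (simp add: sum_subtractf)
  finally show ?thesis .
qed

lemma FW_set_corruption_bound:
  assumes "sample w" "corruption \<tau> w w'" "x \<in> FW_set g w'"
  shows "(1 - \<tau> * (1 + skewness g)) * g x \<le> (\<Sum>a\<in>{a. w a \<noteq> 0}. w a * (g a + g (- a)))"
proof -
  define A where "A = {a. w a \<noteq> 0}"
  have "fin_weights w" and fA: "finite A" and w: "\<And>a. 0 \<le> w a" "sum w A = 1"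
    using assms(1) unfolding sample_def fin_weights_def A_def by auto
  then obtain C v where C: "C \<subseteq> A" "sum w C \<le> \<tau>" and v: "fin_weights v" "mass v = sum w C"
    and f: "\<And>y. fw_objective g w' y = (\<Sum>a\<in>A - C. w a * g (y - a)) + fw_objective g v y"
    using corruption_fw_objective[OF _ assms(2), of g] unfolding A_def by blast
  define s where "s = sum w C"
  define \<sigma> where "\<sigma> = skewness g"
  have s: "0 \<le> s" "s \<le> \<tau>" using C w unfolding s_def by (auto intro: sum_nonneg)
  have kept_mass: "sum w (A - C) = 1 - s"
    using sum_diff[OF fA C(1), of w] w(2) unfolding s_def by simp
  have "(\<Sum>a\<in>A - C. w a * (g a + g (- a))) \<le> (\<Sum>a\<in>A. w a * (g a + g (- a)))"
    using fA w(1) nonneg by (intro sum_mono2) (auto intro: add_nonneg_nonneg)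
  then have kept: "(1 - s) * g x - (\<Sum>a\<in>A. w a * (g a + g (- a)))
      \<le> (\<Sum>a\<in>A - C. w a * g (x - a)) - (\<Sum>a\<in>A - C. w a * g (0 - a))"
    using weighted_sum_increment_ge[of "A - C" w x] fA w(1) kept_mass by simp
  have "g (- x) \<le> \<sigma> * g x" using le_skewness_mult[of "- x"] unfolding \<sigma>_def by simp
  then have inserted: "fw_objective g v 0 \<le> fw_objective g v x + s * (\<sigma> * g x)"
    using fw_objective_le_at_zero[OF v(1), of x] mult_left_mono[OF _ s(1)] v(2)
    unfolding s_def by fastforce
  have "fw_objective g w' x \<le> fw_objective g w' 0" using assms(3) unfolding FW_set_def by blast
  moreover have "(1 - s * (1 + \<sigma>)) * g x = (1 - s) * g x - s * (\<sigma> * g x)"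
    by (simp add: algebra_simps)
  ultimately have "(1 - s * (1 + \<sigma>)) * g x \<le> (\<Sum>a\<in>A. w a * (g a + g (- a)))"
    using kept inserted f[of x] f[of 0] by linarith
  moreover have "s * (1 + \<sigma>) \<le> \<tau> * (1 + \<sigma>)"
    using s skewness_nonneg unfolding \<sigma>_def by (intro mult_right_mono) auto
  then have "(1 - \<tau> * (1 + \<sigma>)) * g x \<le> (1 - s * (1 + \<sigma>)) * g x"
    using nonneg[of x] by (intro mult_right_mono) auto
  ultimately show ?thesis unfolding A_def \<sigma>_def by linarith
qed

lemma robust_if_below:
  assumes "0 \<le> \<tau>" "\<tau> * (1 + skewness g) < 1"
  shows "robust g \<tau>"
  unfolding robust_def
proof (intro allI impI)
  fix w :: "'a \<Rightarrow> real" assume "sample w"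
  define \<delta> where "\<delta> = 1 - \<tau> * (1 + skewness g)"
  define c where "c = (\<Sum>a\<in>{a. w a \<noteq> 0}. w a * (g a + g (- a))) / \<delta>"
  have "0 < \<delta>" using assms unfolding \<delta>_def by simp
  then have "FW_set g w' \<subseteq> {x. g x \<le> c}" if "corruption \<tau> w w'" for w'
    using FW_set_corruption_bound[OF \<open>sample w\<close> that] unfolding c_def \<delta>_def[symmetric]
    by (auto simp: pos_le_divide_eq mult.commute)
  then show "\<exists>K. bounded K \<and> (\<forall>w'. corruption \<tau> w w' \<longrightarrow> FW_set g w' \<subseteq> K)"
    using bounded_sublevel by blast
qed

lemma pos_if_one_less_mult_skewness:
  assumes "1 < \<tau> * (1 + skewness g)"
  shows "0 < \<tau>"
proof (rule ccontr)
  assume "\<not> 0 < \<tau>"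
  then have "\<tau> * (1 + skewness g) \<le> 0" using skewness_nonneg by (intro mult_nonpos_nonneg) auto
  then show False using assms by simp
qed

lemma exists_skewed_direction:
  assumes "1 < \<tau> * (1 + skewness g)"
  obtains u where "(1 - \<tau>) * g (- u) < \<tau> * g u"
proof -
  have "0 < \<tau>" using assms by (rule pos_if_one_less_mult_skewness)
  then have "(1 - \<tau>) / \<tau> < skewness g" using assms by (simp add: field_simps)
  then obtain u where "(1 - \<tau>) / \<tau> * g (- u) < g u" by (rule less_skewnessE)
  then show thesis using that \<open>0 < \<tau>\<close> by (simp add: field_simps)
qed

lemma two_point_FW_set_far:
  assumes "0 \<le> \<tau>" "\<tau> \<le> 1"
    and "x \<in> FW_set g (\<lambda>a. point_weight 0 (1 - \<tau>) a + point_weight p \<tau> a)"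
  shows "\<tau> * g (- p) - (1 - \<tau>) * g p \<le> \<tau> * g (- x)"
proof -
  have f: "fw_objective g (\<lambda>a. point_weight 0 (1 - \<tau>) a + point_weight p \<tau> a) y
      = (1 - \<tau>) * g y + \<tau> * g (y - p)" for y
    using assms(1,2) by (simp add: fw_objective_add fin_weights_point_weight fw_objective_point_weight)
  have "fw_objective g (\<lambda>a. point_weight 0 (1 - \<tau>) a + point_weight p \<tau> a) x
      \<le> fw_objective g (\<lambda>a. point_weight 0 (1 - \<tau>) a + point_weight p \<tau> a) p"
    using assms(3) unfolding FW_set_def by blast
  then have "(1 - \<tau>) * g x + \<tau> * g (x - p) \<le> (1 - \<tau>) * g p" by (simp only: f) simp
  moreover have "\<tau> * g (- p) \<le> \<tau> * g (x - p) + \<tau> * g (- x)"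
    using triangle[of "x - p" "- x"] assms(1) by (simp add: mult_left_mono flip: distrib_left)
  moreover have "0 \<le> (1 - \<tau>) * g x" using assms(2) nonneg by simp
  ultimately show ?thesis by linarith
qed

lemma not_robust_if_above:
  assumes "\<tau> < 1" "1 < \<tau> * (1 + skewness g)"
  shows "\<not> robust g \<tau>"
proof
  assume "robust g \<tau>"
  obtain u where u: "(1 - \<tau>) * g (- u) < \<tau> * g u" using exists_skewed_direction[OF assms(2)] .
  define D where "D = \<tau> * g u - (1 - \<tau>) * g (- u)"
  have "0 < D" using u unfolding D_def by simp
  have "0 < \<tau>" using assms(2) by (rule pos_if_one_less_mult_skewness)
  have "u \<noteq> 0" using u by auto
  define two_point :: "'a \<Rightarrow> 'a \<Rightarrow> real" where
    "two_point p = (\<lambda>a. point_weight 0 (1 - \<tau>) a + point_weight p \<tau> a)" for p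
  have fin: "fin_weights (two_point p)" and "mass (two_point p) = 1" for p
    using \<open>0 < \<tau>\<close> assms(1) unfolding two_point_def
    by (simp_all add: fin_weights_add fin_weights_point_weight mass_add mass_point_weight)
  then have "sample (two_point u)" unfolding sample_def mass_def by simp
  then obtain K where "bounded K" and K: "\<And>w'. corruption \<tau> (two_point u) w' \<Longrightarrow> FW_set g w' \<subseteq> K"
    using \<open>robust g \<tau>\<close> unfolding robust_def by blast
  have "bounded (uminus ` K)" using \<open>bounded K\<close> by simp
  then obtain R where R: "\<And>y. y \<in> uminus ` K \<Longrightarrow> g y \<le> R"
    by (rule bounded_imp_bounded_values) blast
  define t where "t = (\<tau> * \<bar>R\<bar> + 1) / D"
  have "0 < t" using \<open>0 < D\<close> \<open>0 < \<tau>\<close> unfolding t_def by (simp add: add_nonneg_pos)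
  have corrupted: "corruption \<tau> (two_point u) (two_point (- (t *\<^sub>R u)))"
    unfolding corruption_def
  proof (intro exI conjI)
    show "{u} \<subseteq> {a. two_point u a \<noteq> 0}" "sum (two_point u) {u} \<le> \<tau>"
      using \<open>u \<noteq> 0\<close> \<open>0 < \<tau>\<close> by (auto simp: two_point_def point_weight_def)
    show "fin_weights (point_weight (- (t *\<^sub>R u)) \<tau>)"
      using \<open>0 < \<tau>\<close> by (simp add: fin_weights_point_weight)
    show "sum (point_weight (- (t *\<^sub>R u)) \<tau>) {a. point_weight (- (t *\<^sub>R u)) \<tau> a \<noteq> 0}
        = sum (two_point u) {u}"
      using mass_point_weight[of "- (t *\<^sub>R u)" \<tau>] \<open>u \<noteq> 0\<close>
      by (simp add: mass_def two_point_def point_weight_def)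
    show "two_point (- (t *\<^sub>R u)) = (\<lambda>a. (if a \<in> {u} then 0 else two_point u a)
        + point_weight (- (t *\<^sub>R u)) \<tau> a)"
      using \<open>u \<noteq> 0\<close> by (auto simp: two_point_def point_weight_def)
  qed
  obtain x where x: "x \<in> FW_set g (two_point (- (t *\<^sub>R u)))"
    using FW_set_nonempty[OF fin] \<open>\<And>p. mass (two_point p) = 1\<close> by fastforce
  have "g (- (t *\<^sub>R u)) = t * g (- u)" "g (t *\<^sub>R u) = t * g u"
    using scaleR[OF \<open>0 < t\<close>, of "- u"] scaleR[OF \<open>0 < t\<close>, of u] by simp_all
  then have "t * D \<le> \<tau> * g (- x)"
    using two_point_FW_set_far[of \<tau> x "- (t *\<^sub>R u)"] x \<open>0 < \<tau>\<close> assms(1)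
    by (simp add: two_point_def D_def algebra_simps)
  also have "\<dots> \<le> \<tau> * \<bar>R\<bar>"
    using R[of "- x"] K[OF corrupted] x \<open>0 < \<tau>\<close> by (intro mult_left_mono) auto
  finally show False using \<open>0 < D\<close> unfolding t_def by simp
qed

end

lemma cSup_eq_if_between:
  fixes S :: "real set"
  assumes "0 < b" "{0..<b} \<subseteq> S" "S \<subseteq> {..b}"
  shows "Sup S = b"
proof (rule antisym)
  show "Sup S \<le> b" using assms by (intro cSup_least) auto
  have "bdd_above S" using assms(3) by (meson bdd_above_Iic bdd_above_mono)
  then show "b \<le> Sup S"
    using cSup_subset_mono[of "{0..<b}" S] assms by simp
qed

theorem mainTheorem6:
  fixes g :: "'a::euclidean_space \<Rightarrow> real"
  assumes "is_gauge g"
  shows "breakdown_point g = 1 / (1 + skewness g)"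
proof -
  interpret asymmetric_norm g using assms by (rule is_gauge_imp_asymmetric_norm)
  have "0 < 1 + skewness g" using skewness_nonneg by simp
  have "{0..<1 / (1 + skewness g)} \<subseteq> {\<tau>. 0 \<le> \<tau> \<and> \<tau> < 1 \<and> robust g \<tau>}"
  proof
    fix \<tau> assume "\<tau> \<in> {0..<1 / (1 + skewness g)}"
    then have "0 \<le> \<tau>" "\<tau> * (1 + skewness g) < 1"
      using \<open>0 < 1 + skewness g\<close> by (auto simp: field_simps)
    moreover have "\<tau> \<le> \<tau> * (1 + skewness g)"
      using \<open>0 \<le> \<tau>\<close> skewness_nonneg by (simp add: algebra_simps)
    ultimately show "\<tau> \<in> {\<tau>. 0 \<le> \<tau> \<and> \<tau> < 1 \<and> robust g \<tau>}" using robust_if_below by simp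
  qed
  moreover have "{\<tau>. 0 \<le> \<tau> \<and> \<tau> < 1 \<and> robust g \<tau>} \<subseteq> {..1 / (1 + skewness g)}"
  proof
    fix \<tau> assume "\<tau> \<in> {\<tau>. 0 \<le> \<tau> \<and> \<tau> < 1 \<and> robust g \<tau>}"
    then have "\<not> 1 < \<tau> * (1 + skewness g)" using not_robust_if_above by blast
    then show "\<tau> \<in> {..1 / (1 + skewness g)}"
      using \<open>0 < 1 + skewness g\<close> by (simp add: field_simps)
  qed
  ultimately show ?thesis
    unfolding breakdown_point_def using \<open>0 < 1 + skewness g\<close> by (intro cSup_eq_if_between) simp_all
qed

end
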